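(* For $\theta\in(-2\pi,2\pi)$ define $$f(\theta)=8\cosh^{-1}\!\left(\frac{\cos\left(\frac{\pi}{4}\right)+\cos^2\left(\frac{\pi}{4}+\frac{\theta}{16}\right)}{\sin^2\left(\frac{\pi}{4}+\frac{\theta}{16}\right)}\right)+8\cosh^{-1}\!\left(\frac{\cos\left(\frac{\pi}{4}\right)+\cos^2\left(\frac{\pi}{4}-\frac{\theta}{16}\right)}{\sin^2\left(\frac{\pi}{4}-\frac{\theta}{16}\right)}\right),$$ which is the sum of the perimeters of the regular hyperbolic octagons of areas $2\pi-\theta$ and $2\pi+\theta$. Then $f(\theta)\geq 2\cdot 8\cosh^{-1}(\sqrt{2}+1)$ for all $\theta\in(-2\pi,2\pi)$. *)

theory Defs
  imports Complex_Main
begin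

definition octf :: "real \<Rightarrow> real" where
  "octf \<theta> =
     8 * arcosh ((cos (pi/4) + (cos (pi/4 + \<theta>/16))^2) / (sin (pi/4 + \<theta>/16))^2)
   + 8 * arcosh ((cos (pi/4) + (cos (pi/4 - \<theta>/16))^2) / (sin (pi/4 - \<theta>/16))^2)"

end

theory Submission
  imports Defs
begin

text \<open>Put \<open>c = cos (pi/4)\<close>, \<open>a = pi/4 + \<theta>/16\<close>, \<open>S = sin a ^ 2\<close>, \<open>T = cos a ^ 2\<close>.
  Then \<open>octf \<theta> = 8 (arcosh u + arcosh v)\<close> with \<open>u = (c + T)/S\<close>, \<open>v = (c + S)/T\<close>, and the
  addition formula for cosh gives
  \<open>cosh (arcosh u + arcosh v) = 1 + (c + 1)(c + s)/(S T)\<close> where \<open>s = sqrt (c^2 - (T - S)^2)\<close>.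
  As \<open>S + T = 1\<close> and \<open>c^2 = 1/2\<close>, we have \<open>4 S T = c^2 + s^2\<close>, and because \<open>(2c + 1) c = c + 1\<close>
  the inequality \<open>s^2 \<le> c s\<close> turns this into \<open>1 + 4 (2c + 1) = cosh (2 arcosh (2c + 1))\<close>
  as a lower bound; equality holds at \<open>\<theta> = 0\<close>.\<close>

lemma cosh_arcosh_add:
  fixes u v :: real
  assumes "u \<ge> 1" "v \<ge> 1"
  shows "cosh (arcosh u + arcosh v) = u * v + sqrt (u\<^sup>2 - 1) * sqrt (v\<^sup>2 - 1)"
  using assms by (simp add: cosh_add sinh_arcosh_real)

lemma twice_arcosh_le_arcosh_add:
  fixes u v w :: real
  assumes "u \<ge> 1" "v \<ge> 1" "w \<ge> 1"
    and "2 * w\<^sup>2 - 1 \<le> u * v + sqrt (u\<^sup>2 - 1) * sqrt (v\<^sup>2 - 1)"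
  shows "2 * arcosh w \<le> arcosh u + arcosh v"
proof -
  have "cosh (2 * arcosh w) \<le> cosh (arcosh u + arcosh v)"
    using assms by (simp add: cosh_double_cosh cosh_arcosh_add)
  then show ?thesis
    using assms by (subst (asm) cosh_real_nonneg_le_iff) auto
qed

lemma quotient_sq_minus_one:
  fixes c S T :: real
  assumes "S \<noteq> 0" "S + T = 1"
  shows "((c + T) / S)\<^sup>2 - 1 = (c + 1) * (c + T - S) / S\<^sup>2"
proof -
  have "((c + T) / S)\<^sup>2 - 1 = ((c + T)\<^sup>2 - S\<^sup>2) / S\<^sup>2"
    using assms(1) by (simp add: power_divide field_simps)
  also have "(c + T)\<^sup>2 - S\<^sup>2 = (c + T - S) * (c + (S + T))"
    by (simp add: power2_eq_square algebra_simps)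
  finally show ?thesis
    using assms(2) by (simp add: mult.commute)
qed

lemma cosh_addition_of_quotients:
  fixes c S T :: real
  assumes "S > 0" "T > 0" "S + T = 1" "\<bar>T - S\<bar> \<le> c"
  defines "u \<equiv> (c + T) / S" and "v \<equiv> (c + S) / T"
  shows "u * v + sqrt (u\<^sup>2 - 1) * sqrt (v\<^sup>2 - 1)
           = 1 + (c + 1) * (c + sqrt (c\<^sup>2 - (T - S)\<^sup>2)) / (S * T)"
proof -
  have "c \<ge> 0" using assms(4) by linarith
  have disc: "c\<^sup>2 - (T - S)\<^sup>2 \<ge> 0"
    using assms(4) abs_le_square_iff[of "T - S" c] \<open>c \<ge> 0\<close> by simp
  have "(c + T) * (c + S) = c * (c + (S + T)) + S * T"
    by (simp add: algebra_simps)
  also have "\<dots> = c * (c + 1) + S * T"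
    using \<open>S + T = 1\<close> by simp
  finally have uv: "u * v = 1 + c * (c + 1) / (S * T)"
    using assms(1,2) by (simp add: u_def v_def field_simps)
  have "(u\<^sup>2 - 1) * (v\<^sup>2 - 1) = (c + 1)\<^sup>2 * ((c + T - S) * (c + S - T)) / (S * T)\<^sup>2"
    using assms(1-3) quotient_sq_minus_one[of S T c] quotient_sq_minus_one[of T S c]
    by (simp add: u_def v_def power2_eq_square mult_ac)
  also have "(c + T - S) * (c + S - T) = c\<^sup>2 - (T - S)\<^sup>2"
    by (simp add: power2_eq_square algebra_simps)
  finally have "(u\<^sup>2 - 1) * (v\<^sup>2 - 1) = ((c + 1) * sqrt (c\<^sup>2 - (T - S)\<^sup>2) / (S * T))\<^sup>2"
    using disc by (simp add: power_divide power_mult_distrib)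
  then have "sqrt (u\<^sup>2 - 1) * sqrt (v\<^sup>2 - 1) = (c + 1) * sqrt (c\<^sup>2 - (T - S)\<^sup>2) / (S * T)"
    using assms(1,2) \<open>c \<ge> 0\<close> disc by (simp add: real_sqrt_mult[symmetric])
  with uv assms(1,2) show ?thesis
    by (simp add: field_simps)
qed

lemma sum_squares_le_of_sq_eq_half:
  fixes c s :: real
  assumes "c\<^sup>2 = 1/2" "0 \<le> s" "s \<le> c"
  shows "(2 * c + 1) * (c\<^sup>2 + s\<^sup>2) \<le> (c + 1) * (c + s)"
proof -
  have "s\<^sup>2 \<le> c * s"
    using assms(2,3) by (simp add: power2_eq_square mult_right_mono)
  then have "(2 * c + 1) * (c\<^sup>2 + s\<^sup>2) \<le> (2 * c + 1) * (c\<^sup>2 + c * s)"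
    using assms by (intro mult_left_mono) auto
  also have "\<dots> = ((2 * c + 1) * c) * (c + s)"
    by (simp add: power2_eq_square algebra_simps)
  also have "(2 * c + 1) * c = c + 1"
    using assms(1) by (simp add: power2_eq_square algebra_simps)
  finally show ?thesis .
qed

lemma octagon_quotients_cosh_bound:
  fixes c S T :: real
  assumes "c > 0" "c\<^sup>2 = 1/2" "S > 0" "T > 0" "S + T = 1" "1/8 \<le> S * T"
  defines "u \<equiv> (c + T) / S" and "v \<equiv> (c + S) / T"
  shows "u \<ge> 1" "v \<ge> 1" "2 * (2 * c + 1)\<^sup>2 - 1 \<le> u * v + sqrt (u\<^sup>2 - 1) * sqrt (v\<^sup>2 - 1)"
proof -
  have "(T - S)\<^sup>2 = (S + T)\<^sup>2 - 4 * (S * T)"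
    by (simp add: power2_eq_square algebra_simps)
  then have TS: "(T - S)\<^sup>2 = 1 - 4 * (S * T)"
    using \<open>S + T = 1\<close> by simp
  then have "\<bar>T - S\<bar> \<le> c"
    using assms(1,2,6) abs_le_square_iff[of "T - S" c] by simp
  then show "u \<ge> 1" "v \<ge> 1"
    using assms(3,4) by (simp_all add: u_def v_def)
  define s where "s = sqrt (c\<^sup>2 - (T - S)\<^sup>2)"
  have disc: "c\<^sup>2 - (T - S)\<^sup>2 \<ge> 0"
    using TS assms(2,6) by linarith
  have "0 \<le> s"
    using disc by (simp add: s_def)
  moreover have "s \<le> c"
    using \<open>c > 0\<close> by (simp add: s_def real_le_lsqrt)
  moreover have "4 * (S * T) = c\<^sup>2 + s\<^sup>2"
    using TS assms(2) disc by (simp add: s_def)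
  ultimately have "(2 * c + 1) * (4 * (S * T)) \<le> (c + 1) * (c + s)"
    using sum_squares_le_of_sq_eq_half[of c s] assms(2) by simp
  then have "4 * (2 * c + 1) \<le> (c + 1) * (c + s) / (S * T)"
    using assms(3,4) by (simp add: pos_le_divide_eq mult_ac)
  moreover have "2 * (2 * c + 1)\<^sup>2 - 1 = 1 + 4 * (2 * c + 1)"
    using assms(2) by (simp add: power2_eq_square algebra_simps)
  ultimately show "2 * (2 * c + 1)\<^sup>2 - 1 \<le> u * v + sqrt (u\<^sup>2 - 1) * sqrt (v\<^sup>2 - 1)"
    using cosh_addition_of_quotients[of S T c] \<open>\<bar>T - S\<bar> \<le> c\<close> assms(3-5)
    by (simp add: u_def v_def s_def)
qed

lemma octf_eq_arcosh_complementary: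
  assumes "a = pi/4 + \<theta>/16"
  shows "octf \<theta> = 8 * (arcosh ((cos (pi/4) + (cos a)\<^sup>2) / (sin a)\<^sup>2)
                        + arcosh ((cos (pi/4) + (sin a)\<^sup>2) / (cos a)\<^sup>2))"
proof -
  have complement: "pi/4 - \<theta>/16 = pi/2 - a"
    using assms by simp
  have "sin (pi/4 - \<theta>/16) = cos a" "cos (pi/4 - \<theta>/16) = sin a"
    unfolding complement by (simp_all add: sin_cos_eq[of a] cos_sin_eq[of a])
  then show ?thesis
    unfolding octf_def assms[symmetric] by (simp only: distrib_left)
qed

lemma sin_sq_mul_cos_sq_gt_one_eighth:
  fixes x :: real
  assumes "\<bar>x\<bar> < pi/4"
  shows "1/8 < (sin (pi/4 + x/2))\<^sup>2 * (cos (pi/4 + x/2))\<^sup>2"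
proof -
  have "sin (pi/4 + x/2) * cos (pi/4 + x/2) = sin (pi/2 + x) / 2"
    using sin_double[of "pi/4 + x/2"] by (simp add: algebra_simps)
  also have "sin (pi/2 + x) = cos x"
    by (simp add: sin_add)
  finally have half: "sin (pi/4 + x/2) * cos (pi/4 + x/2) = cos x / 2" .
  have product: "(sin (pi/4 + x/2))\<^sup>2 * (cos (pi/4 + x/2))\<^sup>2 = (cos x)\<^sup>2 / 4"
    unfolding power_mult_distrib[symmetric] half by (simp add: power_divide)
  have "cos (pi/4) < cos \<bar>x\<bar>"
    using assms by (subst cos_mono_less_eq) auto
  then have "(cos (pi/4))\<^sup>2 < (cos x)\<^sup>2"
    by (intro power_strict_mono) (simp_all add: cos_45)
  then show ?thesis
    unfolding product by (simp add: cos_45 power_divide)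
qed

theorem lemma4p2:
  fixes \<theta> :: real
  assumes "-2*pi < \<theta>" and "\<theta> < 2*pi"
  shows "octf \<theta> \<ge> 2 * (8 * arcosh (sqrt 2 + 1))"
proof -
  define a where "a = pi/4 + \<theta>/16"
  define c where "c = cos (pi/4)"
  have c: "c > 0" "c\<^sup>2 = 1/2"
    by (simp_all add: c_def cos_45 power_divide)
  have "0 < a" "a < pi/2"
    using assms by (simp_all add: a_def)
  then have "sin a > 0" "cos a > 0"
    by (simp_all add: sin_gt_zero cos_gt_zero_pi)
  moreover have "1/8 < (sin a)\<^sup>2 * (cos a)\<^sup>2"
    using sin_sq_mul_cos_sq_gt_one_eighth[of "\<theta>/8"] assms by (simp add: a_def)
  ultimately have "2 * arcosh (2 * c + 1)
      \<le> arcosh ((c + (cos a)\<^sup>2) / (sin a)\<^sup>2) + arcosh ((c + (sin a)\<^sup>2) / (cos a)\<^sup>2)"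
    using octagon_quotients_cosh_bound[OF c, of "(sin a)\<^sup>2" "(cos a)\<^sup>2"] c
    by (intro twice_arcosh_le_arcosh_add) simp_all
  moreover have "2 * c + 1 = sqrt 2 + 1"
    by (simp add: c_def cos_45)
  ultimately show ?thesis
    using octf_eq_arcosh_complementary[OF a_def] by (simp add: c_def)
qed

end
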